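(* Let $R$ be a finite set of variables, $\mu\in\mathcal{D}(\mathrm{Mem}[R])$, and $S\subseteq R$. The following are equivalent: (i) $S$ satisfies NA in $\mu$; (ii) $\mu$ is $\mathcal{S}$-PNA for every partition $\mathcal{S}$ of $S$; (iii) $\mu$ is $\{\{s\}\mid s\in S\}$-PNA.
   Context: Fix a set $\mathrm{Var}$ of variables; values are real numbers. For finite $S\subseteq\mathrm{Var}$, $\mathrm{Mem}[S]$ is the set of maps $S\to\mathbb{R}$, ordered pointwise; for $m\in\mathrm{Mem}[S]$ and $A\subseteq S$, $p_A(m)$ is the restriction of $m$ to $A$. A distribution on a set $Y$ is a countably supported $\mu:Y\to[0,1]$ with total mass $1$; $\mathcal{D}(Y)$ is the set of these; for $\mu\in\mathcal{D}(\mathrm{Mem}[S])$, $\mathrm{dom}(\mu)=S$ and, for $A\subseteq S$, $\pi_A\mu(x)=\sum_{x'\in\mathrm{Mem}[S],\,p_A(x')=x}\mu(x')$. Monotone means non-decreasing and antitone means non-increasing (w.r.t. the pointwise order). A partition is a set of pairwise disjoint nonempty sets; a partition $\mathcal{T}$ coarsens $\mathcal{S}$ if $\bigcup\mathcal{T}=\bigcup\mathcal{S}$ and each element of $\mathcal{T}$ is the union of some subfamily of $\mathcal{S}$. For $\mu\in\mathcal{D}(\mathrm{Mem}[R])$ and a partition $\mathcal{S}$ with $\bigcup\mathcal{S}\subseteq R$, $\mu$ is $\mathcal{S}$-PNA if for every $\mathcal{T}$ coarsening $\mathcal{S}$ and every family $(f_A:\mathrm{Mem}[A]\to[0,\infty))_{A\in\mathcal{T}}$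 of functions that are all monotone or all antitone, $\mathbb{E}_{m\sim\mu}[\prod_{A\in\mathcal{T}}f_A(p_Am)]\le\prod_{A\in\mathcal{T}}\mathbb{E}_{m\sim\mu}[f_A(p_Am)]$. For disjoint $A,B\subseteq R$, $\mu$ is $(A,B)$-NA if for every pair $f:\mathrm{Mem}[A]\to\mathbb{R}$, $g:\mathrm{Mem}[B]\to\mathbb{R}$ that are both monotone or both antitone, and each of which is bounded below or bounded above, $\mathbb{E}_{m\sim\mu}[f(p_Am)g(p_Bm)]\le\mathbb{E}_{m\sim\mu}[f(p_Am)]\cdot\mathbb{E}_{m\sim\mu}[g(p_Bm)]$. A set $S\subseteq R$ satisfies NA in $\mu$ if $\mu$ is $(A,B)$-NA for all disjoint $A,B\subseteq S$. *)

theory Defs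
  imports "HOL-Probability.Probability"
begin

definition Mem :: "'v set \<Rightarrow> ('v \<rightharpoonup> real) set" where
  "Mem S = {m. dom m = S}"

definition proj :: "'v set \<Rightarrow> ('v \<rightharpoonup> real) \<Rightarrow> ('v \<rightharpoonup> real)" where
  "proj A m = m |` A"

definition mem_le :: "'v set \<Rightarrow> ('v \<rightharpoonup> real) \<Rightarrow> ('v \<rightharpoonup> real) \<Rightarrow> bool" where
  "mem_le A m m' \<longleftrightarrow> (\<forall>x\<in>A. the (m x) \<le> the (m' x))"

definition monotone_mem :: "'v set \<Rightarrow> (('v \<rightharpoonup> real) \<Rightarrow> real) \<Rightarrow> bool" where
  "monotone_mem A f \<longleftrightarrow>
     (\<forall>m\<in>Mem A. \<forall>m'\<in>Mem A. mem_le A m m' \<longrightarrow> f m \<le> f m')"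

definition antitone_mem :: "'v set \<Rightarrow> (('v \<rightharpoonup> real) \<Rightarrow> real) \<Rightarrow> bool" where
  "antitone_mem A f \<longleftrightarrow>
     (\<forall>m\<in>Mem A. \<forall>m'\<in>Mem A. mem_le A m m' \<longrightarrow> f m' \<le> f m)"

definition bdd_below_mem :: "'v set \<Rightarrow> (('v \<rightharpoonup> real) \<Rightarrow> real) \<Rightarrow> bool" where
  "bdd_below_mem A f \<longleftrightarrow> (\<exists>c. \<forall>m\<in>Mem A. c \<le> f m)"

definition bdd_above_mem :: "'v set \<Rightarrow> (('v \<rightharpoonup> real) \<Rightarrow> real) \<Rightarrow> bool" where
  "bdd_above_mem A f \<longleftrightarrow> (\<exists>c. \<forall>m\<in>Mem A. f m \<le> c)"

definition is_dist_on :: "'v set \<Rightarrow> ('v \<rightharpoonup> real) pmf \<Rightarrow> bool" where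
  "is_dist_on R \<mu> \<longleftrightarrow> set_pmf \<mu> \<subseteq> Mem R"

definition is_partition :: "'v set set \<Rightarrow> bool" where
  "is_partition P \<longleftrightarrow> (\<forall>A\<in>P. A \<noteq> {}) \<and> (\<forall>A\<in>P. \<forall>B\<in>P. A \<noteq> B \<longrightarrow> A \<inter> B = {})"

definition coarsens :: "'v set set \<Rightarrow> 'v set set \<Rightarrow> bool" where
  "coarsens T S \<longleftrightarrow> \<Union>T = \<Union>S \<and> (\<forall>A\<in>T. \<exists>F\<subseteq>S. A = \<Union>F)"

text \<open>S-PNA. Expectations of nonnegative functions are taken in [0,\<infinity>] (nn_integral).\<close>
definition PNA :: "('v \<rightharpoonup> real) pmf \<Rightarrow> 'v set set \<Rightarrow> bool" where
  "PNA \<mu> S \<longleftrightarrow>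
    (\<forall>T f. is_partition T \<and> coarsens T S \<and>
        (\<forall>A\<in>T. \<forall>m\<in>Mem A. 0 \<le> f A m) \<and>
        ((\<forall>A\<in>T. monotone_mem A (f A)) \<or> (\<forall>A\<in>T. antitone_mem A (f A)))
      \<longrightarrow> (\<integral>\<^sup>+ m. ennreal (\<Prod>A\<in>T. f A (proj A m)) \<partial>measure_pmf \<mu>)
          \<le> (\<Prod>A\<in>T. \<integral>\<^sup>+ m. ennreal (f A (proj A m)) \<partial>measure_pmf \<mu>))"

text \<open>(A,B)-NA. Reading: the inequality of expectations is required whenever the
  three expectations exist as real numbers (integrability).\<close>
definition NA_pair :: "('v \<rightharpoonup> real) pmf \<Rightarrow> 'v set \<Rightarrow> 'v set \<Rightarrow> bool" where
  "NA_pair \<mu> A B \<longleftrightarrow>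
    (\<forall>f g. ((monotone_mem A f \<and> monotone_mem B g) \<or> (antitone_mem A f \<and> antitone_mem B g)) \<and>
        (bdd_below_mem A f \<or> bdd_above_mem A f) \<and> (bdd_below_mem B g \<or> bdd_above_mem B g) \<and>
        integrable (measure_pmf \<mu>) (\<lambda>m. f (proj A m)) \<and>
        integrable (measure_pmf \<mu>) (\<lambda>m. g (proj B m)) \<and>
        integrable (measure_pmf \<mu>) (\<lambda>m. f (proj A m) * g (proj B m))
      \<longrightarrow> measure_pmf.expectation \<mu> (\<lambda>m. f (proj A m) * g (proj B m))
          \<le> measure_pmf.expectation \<mu> (\<lambda>m. f (proj A m)) *
             measure_pmf.expectation \<mu> (\<lambda>m. g (proj B m)))"

definition satisfies_NA :: "('v \<rightharpoonup> real) pmf \<Rightarrow> 'v set \<Rightarrow> bool" where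
  "satisfies_NA \<mu> S \<longleftrightarrow> (\<forall>A B. A \<subseteq> S \<and> B \<subseteq> S \<and> A \<inter> B = {} \<longrightarrow> NA_pair \<mu> A B)"

end

theory Submission
  imports Defs
begin

text \<open>
  (i) \<open>\<Longrightarrow>\<close> (ii): for bounded nonnegative functions the product inequality over disjoint blocks
  follows from NA by splitting off one block at a time, because a product of nonnegative monotone
  functions of the remaining blocks is again a monotone function of their union. Unbounded functions
  are then reached by truncation and monotone convergence.

  (iii) \<open>\<Longrightarrow>\<close> (i): grouping the singletons of \<open>S\<close> into the blocks \<open>A\<close>, \<open>B\<close> and the singletons of
  \<open>S - A - B\<close>, with the constant \<open>1\<close> on the latter, yields \<open>E[fg] \<le> E[f] E[g]\<close> for nonnegative \<open>f, g\<close>.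
  Covariance is invariant under adding constants, which covers bounded \<open>f, g\<close>, and clipping
  together with dominated convergence covers integrable ones.
\<close>

section \<open>Memories and monotone functions\<close>

lemma proj_in_Mem: "m \<in> Mem R \<Longrightarrow> A \<subseteq> R \<Longrightarrow> proj A m \<in> Mem A"
  by (auto simp: Mem_def proj_def)

lemma proj_proj: "A \<subseteq> U \<Longrightarrow> proj A (proj U m) = proj A m"
  by (simp add: proj_def Int_absorb1)

lemma proj_empty: "proj {} m = Map.empty"
  by (simp add: proj_def)

lemma mem_le_proj: "mem_le U m m' \<Longrightarrow> A \<subseteq> U \<Longrightarrow> mem_le A (proj A m) (proj A m')"
  by (auto simp: mem_le_def proj_def)

lemma monotone_mem_comp: "mono h \<Longrightarrow> monotone_mem A f \<Longrightarrow> monotone_mem A (\<lambda>m. h (f m))"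
  by (auto simp: monotone_mem_def mono_def)

lemma antitone_mem_comp: "mono h \<Longrightarrow> antitone_mem A f \<Longrightarrow> antitone_mem A (\<lambda>m. h (f m))"
  by (auto simp: antitone_mem_def mono_def)

lemma monotone_mem_prod_proj:
  assumes "\<forall>A\<in>T. A \<subseteq> U" and "\<forall>A\<in>T. \<forall>m. 0 \<le> f A m" and "\<forall>A\<in>T. monotone_mem A (f A)"
  shows "monotone_mem U (\<lambda>m. \<Prod>A\<in>T. f A (proj A m))"
  unfolding monotone_mem_def
proof (intro ballI impI prod_mono conjI)
  fix m m' A assume "m \<in> Mem U" "m' \<in> Mem U" "mem_le U m m'" "A \<in> T"
  with assms show "f A (proj A m) \<le> f A (proj A m')"
    unfolding monotone_mem_def by (metis proj_in_Mem mem_le_proj)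
  show "0 \<le> f A (proj A m)"
    using assms(2) \<open>A \<in> T\<close> by blast
qed

lemma antitone_mem_prod_proj:
  assumes "\<forall>A\<in>T. A \<subseteq> U" and "\<forall>A\<in>T. \<forall>m. 0 \<le> f A m" and "\<forall>A\<in>T. antitone_mem A (f A)"
  shows "antitone_mem U (\<lambda>m. \<Prod>A\<in>T. f A (proj A m))"
  unfolding antitone_mem_def
proof (intro ballI impI prod_mono conjI)
  fix m m' A assume "m \<in> Mem U" "m' \<in> Mem U" "mem_le U m m'" "A \<in> T"
  with assms show "f A (proj A m') \<le> f A (proj A m)"
    unfolding antitone_mem_def by (metis proj_in_Mem mem_le_proj)
  show "0 \<le> f A (proj A m')"
    using assms(2) \<open>A \<in> T\<close> by blast
qed

section \<open>Expectations under discrete distributions\<close>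

lemma integrable_measure_pmf_bounded:
  fixes f :: "'a \<Rightarrow> real"
  assumes "\<And>x. \<bar>f x\<bar> \<le> c"
  shows "integrable (measure_pmf \<mu>) f"
  by (rule measure_pmf.integrable_const_bound[where B = c]) (use assms in auto)

lemma nn_integral_measure_pmf_bounded:
  fixes f :: "'a \<Rightarrow> real"
  assumes "\<And>x. 0 \<le> f x" and "\<And>x. f x \<le> c"
  shows "(\<integral>\<^sup>+x. ennreal (f x) \<partial>measure_pmf \<mu>) = ennreal (measure_pmf.expectation \<mu> f)"
proof (rule nn_integral_eq_integral)
  show "integrable (measure_pmf \<mu>) f"
    by (rule integrable_measure_pmf_bounded[where c = c]) (use assms in auto)
qed (use assms in simp)

lemma (in prob_space) covariance_shift:
  fixes X Y :: "'a \<Rightarrow> real"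
  assumes "integrable M X" and "integrable M Y" and "integrable M (\<lambda>x. X x * Y x)"
  shows "expectation (\<lambda>x. (X x + c) * (Y x + d)) - expectation (\<lambda>x. X x + c) * expectation (\<lambda>x. Y x + d)
       = expectation (\<lambda>x. X x * Y x) - expectation X * expectation Y"
proof -
  have "(\<lambda>x. (X x + c) * (Y x + d)) = (\<lambda>x. (X x * Y x + d * X x) + (c * Y x + c * d))"
    by (simp add: fun_eq_iff ring_distribs)
  then show ?thesis
    using assms by (simp add: algebra_simps prob_space)
qed

definition clip :: "real \<Rightarrow> real \<Rightarrow> real" where
  "clip c x = max (- c) (min x c)"

lemma abs_clip_le_bound: "0 \<le> c \<Longrightarrow> \<bar>clip c x\<bar> \<le> c"
  by (auto simp: clip_def)

lemma abs_clip_le: "0 \<le> c \<Longrightarrow> \<bar>clip c x\<bar> \<le> \<bar>x\<bar>"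
  by (auto simp: clip_def)

lemma mono_clip: "mono (clip c)"
  by (auto simp: clip_def mono_def)

lemma eventually_clip_eq: "eventually (\<lambda>n. clip (real n) x = x) sequentially"
  using eventually_ge_at_top[of "nat \<lceil>\<bar>x\<bar>\<rceil>"]
  by (rule eventually_mono) (auto simp: clip_def)

lemma tendsto_expectation_eventually_eq:
  fixes F :: "nat \<Rightarrow> 'a \<Rightarrow> real"
  assumes "integrable (measure_pmf \<mu>) w" and "\<And>n x. \<bar>F n x\<bar> \<le> \<bar>w x\<bar>"
    and "\<And>x. eventually (\<lambda>n. F n x = w x) sequentially"
  shows "(\<lambda>n. measure_pmf.expectation \<mu> (F n)) \<longlonglongrightarrow> measure_pmf.expectation \<mu> w"
proof (rule integral_dominated_convergence[where w = "\<lambda>x. \<bar>w x\<bar>"])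
  show "AE x in measure_pmf \<mu>. (\<lambda>n. F n x) \<longlonglongrightarrow> w x"
    by (intro AE_I2 tendsto_eventually assms(3))
qed (use assms in auto)

lemma expectation_mult_le_of_clipped:
  fixes X Y :: "'a \<Rightarrow> real"
  assumes int_X: "integrable (measure_pmf \<mu>) X" and int_Y: "integrable (measure_pmf \<mu>) Y"
    and int_XY: "integrable (measure_pmf \<mu>) (\<lambda>x. X x * Y x)"
    and clipped: "\<And>n. measure_pmf.expectation \<mu> (\<lambda>x. clip (real n) (X x) * clip (real n) (Y x))
      \<le> measure_pmf.expectation \<mu> (\<lambda>x. clip (real n) (X x)) * measure_pmf.expectation \<mu> (\<lambda>x. clip (real n) (Y x))"
  shows "measure_pmf.expectation \<mu> (\<lambda>x. X x * Y x) \<le> measure_pmf.expectation \<mu> X * measure_pmf.expectation \<mu> Y"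
proof -
  have "(\<lambda>n. measure_pmf.expectation \<mu> (\<lambda>x. clip (real n) (X x) * clip (real n) (Y x)))
      \<longlonglongrightarrow> measure_pmf.expectation \<mu> (\<lambda>x. X x * Y x)"
    using int_XY
  proof (rule tendsto_expectation_eventually_eq)
    show "\<bar>clip (real n) (X x) * clip (real n) (Y x)\<bar> \<le> \<bar>X x * Y x\<bar>" for n x
      by (auto simp: abs_mult intro!: mult_mono abs_clip_le)
    show "eventually (\<lambda>n. clip (real n) (X x) * clip (real n) (Y x) = X x * Y x) sequentially" for x
      using eventually_conj[OF eventually_clip_eq[of "X x"] eventually_clip_eq[of "Y x"]]
      by (rule eventually_mono) simp
  qed
  moreover have "(\<lambda>n. measure_pmf.expectation \<mu> (\<lambda>x. clip (real n) (X x))) \<longlonglongrightarrow> measure_pmf.expectation \<mu> X"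
    using int_X by (rule tendsto_expectation_eventually_eq) (auto intro: abs_clip_le eventually_clip_eq)
  moreover have "(\<lambda>n. measure_pmf.expectation \<mu> (\<lambda>x. clip (real n) (Y x))) \<longlonglongrightarrow> measure_pmf.expectation \<mu> Y"
    using int_Y by (rule tendsto_expectation_eventually_eq) (auto intro: abs_clip_le eventually_clip_eq)
  ultimately show ?thesis
    using clipped by (intro LIMSEQ_le[OF _ tendsto_mult]) auto
qed

lemma nn_integral_prod_truncate:
  fixes g :: "'b \<Rightarrow> 'a \<Rightarrow> real"
  assumes "finite T" and "AE x in measure_pmf \<mu>. \<forall>A\<in>T. 0 \<le> g A x"
  shows "(\<integral>\<^sup>+x. ennreal (\<Prod>A\<in>T. g A x) \<partial>measure_pmf \<mu>)
       = (SUP n. \<integral>\<^sup>+x. ennreal (\<Prod>A\<in>T. max 0 (min (g A x) (real n))) \<partial>measure_pmf \<mu>)"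
proof -
  define F where "F n x = ennreal (\<Prod>A\<in>T. max 0 (min (g A x) (real n)))" for n x
  have inc: "incseq F"
    by (auto simp: F_def incseq_def le_fun_def intro!: ennreal_leI prod_mono)
  have "AE x in measure_pmf \<mu>. ennreal (\<Prod>A\<in>T. g A x) = (SUP n. F n x)"
    using assms(2)
  proof (rule eventually_mono)
    fix x assume nonneg: "\<forall>A\<in>T. 0 \<le> g A x"
    have "\<forall>A\<in>T. eventually (\<lambda>n. max 0 (min (g A x) (real n)) = g A x) sequentially"
    proof
      fix A assume "A \<in> T"
      then have "0 \<le> g A x" using nonneg by blast
      show "eventually (\<lambda>n. max 0 (min (g A x) (real n)) = g A x) sequentially"
        using eventually_ge_at_top[of "nat \<lceil>g A x\<rceil>"]
        by (rule eventually_mono) (use \<open>0 \<le> g A x\<close> in \<open>auto simp: nat_le_iff ceiling_le_iff\<close>)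
    qed
    then have "eventually (\<lambda>n. F n x = ennreal (\<Prod>A\<in>T. g A x)) sequentially"
      unfolding F_def by (rule eventually_mono[OF eventually_ball_finite[OF assms(1)]]) simp
    then have "(\<lambda>n. F n x) \<longlonglongrightarrow> ennreal (\<Prod>A\<in>T. g A x)"
      by (rule tendsto_eventually)
    moreover have "(\<lambda>n. F n x) \<longlonglongrightarrow> (SUP n. F n x)"
      using inc by (intro LIMSEQ_SUP) (auto simp: incseq_def le_fun_def)
    ultimately show "ennreal (\<Prod>A\<in>T. g A x) = (SUP n. F n x)"
      by (rule LIMSEQ_unique)
  qed
  then have "(\<integral>\<^sup>+x. ennreal (\<Prod>A\<in>T. g A x) \<partial>measure_pmf \<mu>) = (\<integral>\<^sup>+x. (SUP n. F n x) \<partial>measure_pmf \<mu>)"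
    by (rule nn_integral_cong_AE)
  also have "\<dots> = (SUP n. \<integral>\<^sup>+x. F n x \<partial>measure_pmf \<mu>)"
    by (rule nn_integral_monotone_convergence_SUP[OF inc]) simp
  finally show ?thesis
    unfolding F_def .
qed

section \<open>NA implies PNA\<close>

lemma NA_pair_expectation_mult_le_bounded:
  fixes f g :: "('v \<rightharpoonup> real) \<Rightarrow> real"
  assumes NA: "NA_pair \<mu> A B" and f_bound: "\<And>m. \<bar>f m\<bar> \<le> c" and g_bound: "\<And>m. \<bar>g m\<bar> \<le> d"
    and mono: "(monotone_mem A f \<and> monotone_mem B g) \<or> (antitone_mem A f \<and> antitone_mem B g)"
  shows "measure_pmf.expectation \<mu> (\<lambda>m. f (proj A m) * g (proj B m))
       \<le> measure_pmf.expectation \<mu> (\<lambda>m. f (proj A m)) * measure_pmf.expectation \<mu> (\<lambda>m. g (proj B m))"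
proof -
  have "bdd_below_mem A f" "bdd_below_mem B g"
    unfolding bdd_below_mem_def using f_bound g_bound by (meson abs_le_iff minus_le_iff)+
  moreover have "integrable (measure_pmf \<mu>) (\<lambda>m. f (proj A m))" "integrable (measure_pmf \<mu>) (\<lambda>m. g (proj B m))"
    using f_bound g_bound by (auto intro: integrable_measure_pmf_bounded)
  moreover have "integrable (measure_pmf \<mu>) (\<lambda>m. f (proj A m) * g (proj B m))"
    using f_bound g_bound by (intro integrable_measure_pmf_bounded[where c = "c * d"])
      (auto simp: abs_mult intro: mult_mono order_trans[OF abs_ge_zero])
  ultimately show ?thesis
    using NA mono unfolding NA_pair_def by blast
qed

lemma NA_expectation_prod_le:
  fixes \<mu> :: "('v \<rightharpoonup> real) pmf" and f :: "'v set \<Rightarrow> ('v \<rightharpoonup> real) \<Rightarrow> real"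
  assumes NA: "satisfies_NA \<mu> S" and "finite T" and "\<forall>A\<in>T. A \<subseteq> S"
    and "\<forall>A\<in>T. \<forall>B\<in>T. A \<noteq> B \<longrightarrow> A \<inter> B = {}"
    and "\<forall>A\<in>T. \<forall>m. 0 \<le> f A m \<and> f A m \<le> c"
    and "(\<forall>A\<in>T. monotone_mem A (f A)) \<or> (\<forall>A\<in>T. antitone_mem A (f A))"
  shows "measure_pmf.expectation \<mu> (\<lambda>m. \<Prod>A\<in>T. f A (proj A m))
       \<le> (\<Prod>A\<in>T. measure_pmf.expectation \<mu> (\<lambda>m. f A (proj A m)))"
  using assms(2-)
proof (induction T rule: finite_induct)
  case empty
  then show ?case by simp
next
  case (insert A0 T)
  define U where "U = \<Union>T"
  define G where "G = (\<lambda>m. \<Prod>A\<in>T. f A (proj A m))"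
  let ?F0 = "\<lambda>m. f A0 (proj A0 m)"
  have TU: "\<forall>A\<in>T. A \<subseteq> U"
    unfolding U_def by auto
  have f_nonneg: "\<forall>A\<in>T. \<forall>m. 0 \<le> f A m"
    using insert.prems(3) by auto
  have G_proj: "G (proj U m) = G m" for m
    unfolding G_def U_def by (intro prod.cong refl) (simp add: proj_proj Union_upper)
  have G_bound: "\<bar>G m\<bar> \<le> c ^ card T" for m
    using prod_mono[of T "\<lambda>A. f A (proj A m)" "\<lambda>_. c"] insert.prems(3)
    by (simp add: G_def prod_nonneg)
  have f0_bound: "\<bar>f A0 m\<bar> \<le> c" for m
    using insert.prems(3) by auto
  have "A0 \<inter> A = {}" if "A \<in> T" for A
    using insert.hyps(2) insert.prems(2) that by (metis insertCI)
  then have "A0 \<inter> U = {}" "A0 \<subseteq> S" "U \<subseteq> S"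
    using insert.prems(1) unfolding U_def by auto
  then have NA_A0_U: "NA_pair \<mu> A0 U"
    using NA unfolding satisfies_NA_def by blast
  have "(monotone_mem A0 (f A0) \<and> monotone_mem U G) \<or> (antitone_mem A0 (f A0) \<and> antitone_mem U G)"
    using insert.prems(4) monotone_mem_prod_proj[OF TU f_nonneg] antitone_mem_prod_proj[OF TU f_nonneg]
    unfolding G_def by auto
  from NA_pair_expectation_mult_le_bounded[OF NA_A0_U f0_bound G_bound this]
  have NA_step: "measure_pmf.expectation \<mu> (\<lambda>m. ?F0 m * G m)
      \<le> measure_pmf.expectation \<mu> ?F0 * measure_pmf.expectation \<mu> G"
    by (simp only: G_proj)
  have IH: "measure_pmf.expectation \<mu> G \<le> (\<Prod>A\<in>T. measure_pmf.expectation \<mu> (\<lambda>m. f A (proj A m)))"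
    unfolding G_def using insert.IH insert.prems by auto
  have "0 \<le> measure_pmf.expectation \<mu> ?F0"
    using insert.prems(3) by (auto intro: integral_nonneg_AE)
  with NA_step IH have "measure_pmf.expectation \<mu> (\<lambda>m. ?F0 m * G m)
      \<le> measure_pmf.expectation \<mu> ?F0 * (\<Prod>A\<in>T. measure_pmf.expectation \<mu> (\<lambda>m. f A (proj A m)))"
    by (meson mult_left_mono order_trans)
  then show ?case
    using insert.hyps by (simp add: G_def)
qed

lemma NA_nn_integral_prod_le_bounded:
  fixes \<mu> :: "('v \<rightharpoonup> real) pmf" and f :: "'v set \<Rightarrow> ('v \<rightharpoonup> real) \<Rightarrow> real"
  assumes NA: "satisfies_NA \<mu> S" and "finite T" and "\<forall>A\<in>T. A \<subseteq> S"
    and "\<forall>A\<in>T. \<forall>B\<in>T. A \<noteq> B \<longrightarrow> A \<inter> B = {}"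
    and bounds: "\<forall>A\<in>T. \<forall>m. 0 \<le> f A m \<and> f A m \<le> c"
    and "(\<forall>A\<in>T. monotone_mem A (f A)) \<or> (\<forall>A\<in>T. antitone_mem A (f A))"
  shows "(\<integral>\<^sup>+m. ennreal (\<Prod>A\<in>T. f A (proj A m)) \<partial>\<mu>)
       \<le> (\<Prod>A\<in>T. \<integral>\<^sup>+m. ennreal (f A (proj A m)) \<partial>\<mu>)"
proof -
  have "(\<integral>\<^sup>+m. ennreal (\<Prod>A\<in>T. f A (proj A m)) \<partial>\<mu>)
      = ennreal (measure_pmf.expectation \<mu> (\<lambda>m. \<Prod>A\<in>T. f A (proj A m)))"
  proof (rule nn_integral_measure_pmf_bounded)
    show "(\<Prod>A\<in>T. f A (proj A m)) \<le> c ^ card T" for m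
      using prod_mono[of T "\<lambda>A. f A (proj A m)" "\<lambda>_. c"] bounds by simp
  qed (use bounds in \<open>auto intro: prod_nonneg\<close>)
  also have "\<dots> \<le> ennreal (\<Prod>A\<in>T. measure_pmf.expectation \<mu> (\<lambda>m. f A (proj A m)))"
    by (rule ennreal_leI NA_expectation_prod_le[OF assms])+
  also have "\<dots> = (\<Prod>A\<in>T. \<integral>\<^sup>+m. ennreal (f A (proj A m)) \<partial>\<mu>)"
    using bounds by (simp add: prod_ennreal integral_nonneg_AE nn_integral_measure_pmf_bounded[where c = c])
  finally show ?thesis .
qed

lemma satisfies_NA_imp_PNA:
  fixes \<mu> :: "('v \<rightharpoonup> real) pmf"
  assumes "finite S" and "set_pmf \<mu> \<subseteq> Mem R" and "S \<subseteq> R"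
    and NA: "satisfies_NA \<mu> S" and "\<Union>P = S"
  shows "PNA \<mu> P"
  unfolding PNA_def
proof (intro allI impI, elim conjE)
  fix T and f :: "'v set \<Rightarrow> ('v \<rightharpoonup> real) \<Rightarrow> real"
  assume "is_partition T" and "coarsens T P"
    and f_nonneg: "\<forall>A\<in>T. \<forall>m\<in>Mem A. 0 \<le> f A m"
    and f_mono: "(\<forall>A\<in>T. monotone_mem A (f A)) \<or> (\<forall>A\<in>T. antitone_mem A (f A))"
  have TS: "\<forall>A\<in>T. A \<subseteq> S"
    using \<open>coarsens T P\<close> \<open>\<Union>P = S\<close> unfolding coarsens_def by auto
  then have "finite T"
    using \<open>finite S\<close> by (meson Pow_iff finite_Pow_iff finite_subset subsetI)
  have disj: "\<forall>A\<in>T. \<forall>B\<in>T. A \<noteq> B \<longrightarrow> A \<inter> B = {}"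
    using \<open>is_partition T\<close> unfolding is_partition_def by auto
  have "proj A x \<in> Mem A" if "x \<in> set_pmf \<mu>" and "A \<in> T" for x A
    using proj_in_Mem[of x R A] assms(2,3) TS that by auto
  then have f_nonneg_AE: "AE x in measure_pmf \<mu>. \<forall>A\<in>T. 0 \<le> f A (proj A x)"
    using f_nonneg by (auto intro!: AE_pmfI)
  \<comment> \<open>Truncating below at 0 as well: \<open>f A\<close> is only known to be nonnegative on \<open>Mem A\<close>.\<close>
  define t where "t n A = (\<lambda>m. max 0 (min (f A m) (real n)))" for n :: nat and A
  have truncated: "(\<integral>\<^sup>+m. ennreal (\<Prod>A\<in>T. t n A (proj A m)) \<partial>\<mu>)
      \<le> (\<Prod>A\<in>T. \<integral>\<^sup>+m. ennreal (f A (proj A m)) \<partial>\<mu>)" for n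
  proof -
    have "mono (\<lambda>x. max 0 (min x (real n)))"
      by (auto simp: mono_def)
    then have t_mono: "(\<forall>A\<in>T. monotone_mem A (t n A)) \<or> (\<forall>A\<in>T. antitone_mem A (t n A))"
      using f_mono monotone_mem_comp antitone_mem_comp unfolding t_def by blast
    have "(\<integral>\<^sup>+m. ennreal (\<Prod>A\<in>T. t n A (proj A m)) \<partial>\<mu>)
        \<le> (\<Prod>A\<in>T. \<integral>\<^sup>+m. ennreal (t n A (proj A m)) \<partial>\<mu>)"
      by (rule NA_nn_integral_prod_le_bounded[OF NA \<open>finite T\<close> TS disj _ t_mono, where c = "real n"])
        (auto simp: t_def)
    also have "\<dots> \<le> (\<Prod>A\<in>T. \<integral>\<^sup>+m. ennreal (f A (proj A m)) \<partial>\<mu>)"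
      using f_nonneg_AE
      by (intro prod_mono_ennreal nn_integral_mono_AE) (auto simp: t_def elim!: eventually_mono)
    finally show ?thesis .
  qed
  have "(\<integral>\<^sup>+m. ennreal (\<Prod>A\<in>T. f A (proj A m)) \<partial>\<mu>)
      = (SUP n. \<integral>\<^sup>+m. ennreal (\<Prod>A\<in>T. t n A (proj A m)) \<partial>\<mu>)"
    unfolding t_def by (rule nn_integral_prod_truncate[OF \<open>finite T\<close> f_nonneg_AE])
  also have "\<dots> \<le> (\<Prod>A\<in>T. \<integral>\<^sup>+m. ennreal (f A (proj A m)) \<partial>\<mu>)"
    by (rule SUP_least) (rule truncated)
  finally show "(\<integral>\<^sup>+m. ennreal (\<Prod>A\<in>T. f A (proj A m)) \<partial>\<mu>)
      \<le> (\<Prod>A\<in>T. \<integral>\<^sup>+m. ennreal (f A (proj A m)) \<partial>\<mu>)" .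
qed

section \<open>PNA for singletons implies NA\<close>

lemma PNA_singletons_nn_integral_mult_le:
  fixes \<mu> :: "('v \<rightharpoonup> real) pmf" and F G :: "('v \<rightharpoonup> real) \<Rightarrow> real"
  assumes "finite S" and PNA: "PNA \<mu> {{s} | s. s \<in> S}"
    and "A \<subseteq> S" and "B \<subseteq> S" and "A \<inter> B = {}" and "A \<noteq> {}" and "B \<noteq> {}"
    and F_nonneg: "\<And>m. 0 \<le> F m" and G_nonneg: "\<And>m. 0 \<le> G m"
    and mono: "(monotone_mem A F \<and> monotone_mem B G) \<or> (antitone_mem A F \<and> antitone_mem B G)"
  shows "(\<integral>\<^sup>+m. ennreal (F (proj A m) * G (proj B m)) \<partial>\<mu>)
       \<le> (\<integral>\<^sup>+m. ennreal (F (proj A m)) \<partial>\<mu>) * (\<integral>\<^sup>+m. ennreal (G (proj B m)) \<partial>\<mu>)"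
proof -
  define Rest where "Rest = (\<lambda>s. {s}) ` (S - A - B)"
  define T where "T = insert A (insert B Rest)"
  define f where "f X = (if X = A then F else if X = B then G else (\<lambda>_. 1))" for X
  have "finite Rest"
    unfolding Rest_def using \<open>finite S\<close> by simp
  have "A \<noteq> B" "A \<notin> Rest" "B \<notin> Rest"
    using \<open>A \<inter> B = {}\<close> \<open>A \<noteq> {}\<close> \<open>B \<noteq> {}\<close> unfolding Rest_def by auto
  then have f_simps: "f A = F" "f B = G" "X \<in> Rest \<Longrightarrow> f X = (\<lambda>_. 1)" for X
    unfolding f_def by auto
  have "is_partition T"
    unfolding is_partition_def T_def Rest_def using assms(5-7) by auto
  moreover have "coarsens T {{s} | s. s \<in> S}"
    unfolding coarsens_def
  proof
    show "\<Union>T = \<Union>{{s} | s. s \<in> S}"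
      unfolding T_def Rest_def using assms(3,4) by auto
    show "\<forall>X\<in>T. \<exists>\<F>\<subseteq>{{s} | s. s \<in> S}. X = \<Union>\<F>"
    proof
      fix X assume "X \<in> T"
      then have "X \<subseteq> S"
        using assms(3,4) unfolding T_def Rest_def by auto
      then show "\<exists>\<F>\<subseteq>{{s} | s. s \<in> S}. X = \<Union>\<F>"
        by (intro exI[of _ "{{s} | s. s \<in> X}"]) auto
    qed
  qed
  moreover have "\<forall>X\<in>T. \<forall>m\<in>Mem X. 0 \<le> f X m"
    unfolding T_def using F_nonneg G_nonneg by (auto simp: f_simps)
  moreover have "(\<forall>X\<in>T. monotone_mem X (f X)) \<or> (\<forall>X\<in>T. antitone_mem X (f X))"
    using mono unfolding T_def by (auto simp: f_simps monotone_mem_def antitone_mem_def)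
  ultimately have "(\<integral>\<^sup>+m. ennreal (\<Prod>X\<in>T. f X (proj X m)) \<partial>\<mu>)
      \<le> (\<Prod>X\<in>T. \<integral>\<^sup>+m. ennreal (f X (proj X m)) \<partial>\<mu>)"
    using PNA unfolding PNA_def by (elim allE[where x = T] allE[where x = f]) blast
  then show ?thesis
    unfolding T_def using \<open>finite Rest\<close> \<open>A \<noteq> B\<close> \<open>A \<notin> Rest\<close> \<open>B \<notin> Rest\<close>
    by (simp add: f_simps measure_pmf.emeasure_space_1 mult.assoc)
qed

lemma PNA_singletons_expectation_mult_le_bounded:
  fixes \<mu> :: "('v \<rightharpoonup> real) pmf" and F G :: "('v \<rightharpoonup> real) \<Rightarrow> real"
  assumes "finite S" and "PNA \<mu> {{s} | s. s \<in> S}"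
    and "A \<subseteq> S" and "B \<subseteq> S" and "A \<inter> B = {}" and "A \<noteq> {}" and "B \<noteq> {}"
    and F_bound: "\<And>m. \<bar>F m\<bar> \<le> c" and G_bound: "\<And>m. \<bar>G m\<bar> \<le> c"
    and mono: "(monotone_mem A F \<and> monotone_mem B G) \<or> (antitone_mem A F \<and> antitone_mem B G)"
  shows "measure_pmf.expectation \<mu> (\<lambda>m. F (proj A m) * G (proj B m))
       \<le> measure_pmf.expectation \<mu> (\<lambda>m. F (proj A m)) * measure_pmf.expectation \<mu> (\<lambda>m. G (proj B m))"
proof -
  let ?X = "\<lambda>m. F (proj A m)" and ?Y = "\<lambda>m. G (proj B m)"
  have "0 \<le> c"
    by (meson F_bound abs_ge_zero order_trans)
  have shifted_bounds: "0 \<le> F m + c" "F m + c \<le> 2 * c" "0 \<le> G m + c" "G m + c \<le> 2 * c" for m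
    using F_bound[of m] G_bound[of m] by (auto simp: abs_le_iff)
  have "mono (\<lambda>x. x + c)"
    by (auto simp: mono_def)
  then have "(\<integral>\<^sup>+m. ennreal ((?X m + c) * (?Y m + c)) \<partial>\<mu>)
      \<le> (\<integral>\<^sup>+m. ennreal (?X m + c) \<partial>\<mu>) * (\<integral>\<^sup>+m. ennreal (?Y m + c) \<partial>\<mu>)"
    using mono monotone_mem_comp antitone_mem_comp shifted_bounds
    by (intro PNA_singletons_nn_integral_mult_le[OF assms(1-7)]) blast+
  moreover have "(\<integral>\<^sup>+m. ennreal ((?X m + c) * (?Y m + c)) \<partial>\<mu>)
      = ennreal (measure_pmf.expectation \<mu> (\<lambda>m. (?X m + c) * (?Y m + c)))"
  proof (rule nn_integral_measure_pmf_bounded)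
    show "(?X m + c) * (?Y m + c) \<le> 2 * c * (2 * c)" for m
      using shifted_bounds \<open>0 \<le> c\<close> by (intro mult_mono) auto
  qed (use shifted_bounds in simp)
  moreover have "(\<integral>\<^sup>+m. ennreal (?X m + c) \<partial>\<mu>) = ennreal (measure_pmf.expectation \<mu> (\<lambda>m. ?X m + c))"
    "(\<integral>\<^sup>+m. ennreal (?Y m + c) \<partial>\<mu>) = ennreal (measure_pmf.expectation \<mu> (\<lambda>m. ?Y m + c))"
    by (rule nn_integral_measure_pmf_bounded[where c = "2 * c"]; use shifted_bounds in simp)+
  moreover have "0 \<le> measure_pmf.expectation \<mu> (\<lambda>m. ?X m + c)" "0 \<le> measure_pmf.expectation \<mu> (\<lambda>m. ?Y m + c)"
    using shifted_bounds by (simp_all add: integral_nonneg_AE)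
  ultimately have "measure_pmf.expectation \<mu> (\<lambda>m. (?X m + c) * (?Y m + c))
      \<le> measure_pmf.expectation \<mu> (\<lambda>m. ?X m + c) * measure_pmf.expectation \<mu> (\<lambda>m. ?Y m + c)"
    by (simp add: ennreal_mult[symmetric])
  moreover have "integrable (measure_pmf \<mu>) ?X" "integrable (measure_pmf \<mu>) ?Y"
    using F_bound G_bound by (auto intro: integrable_measure_pmf_bounded)
  moreover have "integrable (measure_pmf \<mu>) (\<lambda>m. ?X m * ?Y m)"
    using F_bound G_bound by (intro integrable_measure_pmf_bounded[where c = "c * c"])
      (auto simp: abs_mult intro: mult_mono order_trans[OF abs_ge_zero])
  ultimately show ?thesis
    using measure_pmf.covariance_shift[of \<mu> ?X ?Y c c] by linarith
qed

lemma PNA_singletons_imp_NA: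
  fixes \<mu> :: "('v \<rightharpoonup> real) pmf"
  assumes "finite S" and "PNA \<mu> {{s} | s. s \<in> S}"
  shows "satisfies_NA \<mu> S"
  unfolding satisfies_NA_def NA_pair_def
proof (intro allI impI, elim conjE)
  fix A B :: "'v set" and f g :: "('v \<rightharpoonup> real) \<Rightarrow> real"
  assume "A \<subseteq> S" and "B \<subseteq> S" and "A \<inter> B = {}"
    and mono: "monotone_mem A f \<and> monotone_mem B g \<or> antitone_mem A f \<and> antitone_mem B g"
    and "integrable (measure_pmf \<mu>) (\<lambda>m. f (proj A m))"
    and "integrable (measure_pmf \<mu>) (\<lambda>m. g (proj B m))"
    and "integrable (measure_pmf \<mu>) (\<lambda>m. f (proj A m) * g (proj B m))"
  show "measure_pmf.expectation \<mu> (\<lambda>m. f (proj A m) * g (proj B m))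
     \<le> measure_pmf.expectation \<mu> (\<lambda>m. f (proj A m)) * measure_pmf.expectation \<mu> (\<lambda>m. g (proj B m))"
  proof (cases "A = {} \<or> B = {}")
    case True
    then show ?thesis
      by (auto simp: proj_empty)
  next
    case False
    then have "A \<noteq> {}" and "B \<noteq> {}"
      by auto
    show ?thesis
    proof (rule expectation_mult_le_of_clipped)
      fix n
      have clip_mono: "(monotone_mem A (\<lambda>m. clip (real n) (f m)) \<and> monotone_mem B (\<lambda>m. clip (real n) (g m)))
          \<or> (antitone_mem A (\<lambda>m. clip (real n) (f m)) \<and> antitone_mem B (\<lambda>m. clip (real n) (g m)))"
        using mono monotone_mem_comp[OF mono_clip] antitone_mem_comp[OF mono_clip] by blast
      show "measure_pmf.expectation \<mu> (\<lambda>m. clip (real n) (f (proj A m)) * clip (real n) (g (proj B m)))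
          \<le> measure_pmf.expectation \<mu> (\<lambda>m. clip (real n) (f (proj A m)))
            * measure_pmf.expectation \<mu> (\<lambda>m. clip (real n) (g (proj B m)))"
        by (rule PNA_singletons_expectation_mult_le_bounded[where c = "real n",
              OF assms \<open>A \<subseteq> S\<close> \<open>B \<subseteq> S\<close> \<open>A \<inter> B = {}\<close> \<open>A \<noteq> {}\<close> \<open>B \<noteq> {}\<close>
                _ _ clip_mono]) (simp_all add: abs_clip_le_bound)
    qed fact+
  qed
qed

theorem mainTheorem4:
  fixes R S :: "'v set" and \<mu> :: "('v \<rightharpoonup> real) pmf"
  assumes "finite R" and "is_dist_on R \<mu>" and "S \<subseteq> R"
  shows "(satisfies_NA \<mu> S \<longleftrightarrow> (\<forall>P. is_partition P \<and> \<Union>P = S \<longrightarrow> PNA \<mu> P))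
       \<and> ((\<forall>P. is_partition P \<and> \<Union>P = S \<longrightarrow> PNA \<mu> P) \<longleftrightarrow> PNA \<mu> {{s} | s. s \<in> S})"
proof -
  have "finite S"
    using assms(1,3) finite_subset by blast
  have i_ii: "satisfies_NA \<mu> S \<Longrightarrow> is_partition P \<Longrightarrow> \<Union>P = S \<Longrightarrow> PNA \<mu> P" for P
    using satisfies_NA_imp_PNA[OF \<open>finite S\<close> _ \<open>S \<subseteq> R\<close>] assms(2) unfolding is_dist_on_def by blast
  have "is_partition {{s} | s. s \<in> S}" and "\<Union>{{s} | s. s \<in> S} = S"
    unfolding is_partition_def by auto
  then have ii_iii: "(\<forall>P. is_partition P \<and> \<Union>P = S \<longrightarrow> PNA \<mu> P) \<Longrightarrow> PNA \<mu> {{s} | s. s \<in> S}"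
    by blast
  have iii_i: "PNA \<mu> {{s} | s. s \<in> S} \<Longrightarrow> satisfies_NA \<mu> S"
    by (rule PNA_singletons_imp_NA[OF \<open>finite S\<close>])
  show ?thesis
    using i_ii ii_iii iii_i by blast
qed

end
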